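(* Let $C$ be a commutative ring, $A$ a $C$-algebra and $n\ge2$. Then $\mathrm{Obst}_{n-1}(A)\supseteq\mathrm{Obst}_n(A)$.
   Context: For $m\ge1$ and each $a\in A$ let $\xi_{1,a},\dots,\xi_{m,a}$ be new commuting central indeterminates, $A[\xi_{m,A}]$ the polynomial algebra over $A$ in all of them, and $I_{m,A}$ the ideal of $A[\xi_{m,A}]$ generated by $a^m+\xi_{1,a}a^{m-1}+\cdots+\xi_{m,a}$, $a\in A$. Define $\mathrm{Obst}_m(A)=A\cap I_{m,A}$. *)

theory Defs
  imports "HOL-Library.Poly_Mapping"
begin

text \<open>Polynomials over a (possibly noncommutative) ring 'a in commuting central
indeterminates indexed by nat \<times> 'a: the indeterminate xi_{i,a} is indexed by (i,a).\<close>

type_synonym 'a xipoly = "((nat \<times> 'a) \<Rightarrow>\<^sub>0 nat) \<Rightarrow>\<^sub>0 'a"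

definition xconst :: "'a::ring_1 \<Rightarrow> 'a xipoly" where
  "xconst a = Poly_Mapping.single 0 a"

definition xvar :: "nat \<Rightarrow> 'a::ring_1 \<Rightarrow> 'a xipoly" where
  "xvar i a = Poly_Mapping.single (Poly_Mapping.single (i, a) 1) 1"

definition polyring :: "nat \<Rightarrow> 'a::ring_1 xipoly set" where
  "polyring m = {p. \<forall>mon \<in> Poly_Mapping.keys p. \<forall>v \<in> Poly_Mapping.keys mon. 1 \<le> fst v \<and> fst v \<le> m}"

definition is_ideal_in :: "'b::ring set \<Rightarrow> 'b set \<Rightarrow> bool" where
  "is_ideal_in R J \<longleftrightarrow> J \<subseteq> R \<and> 0 \<in> J \<and> (\<forall>x\<in>J. \<forall>y\<in>J. x + y \<in> J) \<and> (\<forall>x\<in>J. - x \<in> J)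
     \<and> (\<forall>r\<in>R. \<forall>x\<in>J. r * x \<in> J \<and> x * r \<in> J)"

definition ideal_gen_in :: "'b::ring set \<Rightarrow> 'b set \<Rightarrow> 'b set" where
  "ideal_gen_in R S = \<Inter> {J. is_ideal_in R J \<and> S \<subseteq> J}"

definition gen_poly :: "nat \<Rightarrow> 'a::ring_1 \<Rightarrow> 'a xipoly" where
  "gen_poly m a = xconst a ^ m + (\<Sum>i\<in>{1..m}. xvar i a * xconst a ^ (m - i))"

definition I_ideal :: "nat \<Rightarrow> 'a::ring_1 xipoly set" where
  "I_ideal m = ideal_gen_in (polyring m) (range (gen_poly m))"

text \<open>Obst_m(A) = A \<inter> I_{m,A}, with A identified with the constant polynomials.\<close>
definition Obst :: "nat \<Rightarrow> 'a::ring_1 set" where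
  "Obst m = {a. xconst a \<in> I_ideal m}"

definition is_algebra_map :: "('c::comm_ring_1 \<Rightarrow> 'a::ring_1) \<Rightarrow> bool" where
  "is_algebra_map f \<longleftrightarrow> f 0 = 0 \<and> f 1 = 1 \<and> (\<forall>x y. f (x + y) = f x + f y)
     \<and> (\<forall>x y. f (x * y) = f x * f y) \<and> (\<forall>c b. f c * b = b * f c)"

end

theory Submission
  imports Defs
begin

text \<open>Setting xi_{n,a} := 0 for every a is a ring homomorphism A[xi_{n,A}] \<rightarrow> A[xi_{n-1,A}]
that fixes A. It sends the generator a^n + xi_{1,a} a^{n-1} + ... + xi_{n,a} to
(a^{n-1} + xi_{1,a} a^{n-2} + ... + xi_{n-1,a}) a, a multiple of a generator of I_{n-1,A};
hence it maps I_{n,A} into I_{n-1,A}, and being the identity on A it maps A \<inter> I_{n,A}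
into A \<inter> I_{n-1,A}.\<close>

lemma keys_add_nat:
  "Poly_Mapping.keys (f + g :: 'b \<Rightarrow>\<^sub>0 nat) = Poly_Mapping.keys f \<union> Poly_Mapping.keys g"
  by (auto simp: in_keys_iff lookup_add)

lemma lookup_mult_double_sum:
  "Poly_Mapping.lookup (p * q) m =
     (\<Sum>l. \<Sum>r. Poly_Mapping.lookup p l * Poly_Mapping.lookup q r when m = l + r)"
proof -
  have "finite {r. (Poly_Mapping.lookup q r when m = l + r) \<noteq> 0}" for l
    by (rule finite_subset[of _ "Poly_Mapping.keys q"]) (auto simp: in_keys_iff)
  then show ?thesis
    unfolding lookup_mult by (simp add: Sum_any_right_distrib mult_when)
qed

lemma keys_mult_all:
  assumes "\<forall>mon \<in> Poly_Mapping.keys p. P mon" and "\<forall>mon \<in> Poly_Mapping.keys q. P mon"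
    and "\<And>a b. P a \<Longrightarrow> P b \<Longrightarrow> P (a + b)"
  shows "\<forall>mon \<in> Poly_Mapping.keys (p * q). P mon"
  using assms keys_mult[of p q] by blast

lemma polyring_iff:
  "p \<in> polyring n \<longleftrightarrow>
     (\<forall>mon \<in> Poly_Mapping.keys p. \<forall>v \<in> Poly_Mapping.keys mon. fst v \<in> {1..n})"
  unfolding polyring_def by simp

lemma polyring_add: "p \<in> polyring n \<Longrightarrow> q \<in> polyring n \<Longrightarrow> p + q \<in> polyring n"
  unfolding polyring_iff using keys_add[of p q] by blast

lemma polyring_mult: "p \<in> polyring n \<Longrightarrow> q \<in> polyring n \<Longrightarrow> p * q \<in> polyring n"
  unfolding polyring_iff by (erule keys_mult_all) (auto simp: keys_add_nat)

lemma polyring_uminus: "p \<in> polyring n \<Longrightarrow> - p \<in> polyring n"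
  unfolding polyring_iff by simp

lemma polyring_zero: "0 \<in> polyring n"
  unfolding polyring_def by simp

lemma polyring_one: "1 \<in> polyring n"
  unfolding polyring_def by simp

lemma polyring_power: "p \<in> polyring n \<Longrightarrow> p ^ j \<in> polyring n"
  by (induction j) (simp_all add: polyring_mult polyring_one)

lemma polyring_sum: "(\<And>i. i \<in> S \<Longrightarrow> f i \<in> polyring n) \<Longrightarrow> sum f S \<in> polyring n"
  by (induction S rule: infinite_finite_induct) (simp_all add: polyring_add polyring_zero)

lemma xconst_in_polyring: "xconst a \<in> polyring n"
  unfolding polyring_def xconst_def by simp

lemma xvar_in_polyring: "i \<in> {1..n} \<Longrightarrow> xvar i a \<in> polyring n"
  unfolding polyring_def xvar_def by simp

lemma gen_poly_in_polyring: "gen_poly n a \<in> polyring n"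
  unfolding gen_poly_def
  by (intro polyring_add polyring_power polyring_sum polyring_mult xconst_in_polyring
      xvar_in_polyring)

lemma is_ideal_in_polyring: "is_ideal_in (polyring n) (polyring n)"
  unfolding is_ideal_in_def
  by (simp add: polyring_zero polyring_add polyring_mult polyring_uminus)

lemma ideal_gen_in_least: "is_ideal_in R J \<Longrightarrow> S \<subseteq> J \<Longrightarrow> ideal_gen_in R S \<subseteq> J"
  unfolding ideal_gen_in_def by blast

lemma ideal_gen_in_superset: "S \<subseteq> ideal_gen_in R S"
  unfolding ideal_gen_in_def by blast

lemma is_ideal_in_ideal_gen_in:
  assumes "is_ideal_in R R" and "S \<subseteq> R"
  shows "is_ideal_in R (ideal_gen_in R S)"
proof -
  have "ideal_gen_in R S \<subseteq> R"
    using assms by (rule ideal_gen_in_least)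
  then show ?thesis
    unfolding is_ideal_in_def by (auto simp: ideal_gen_in_def is_ideal_in_def)
qed

lemma is_ideal_in_vimage:
  assumes "is_ideal_in R R" and "is_ideal_in R' J" and "f ` R \<subseteq> R'"
    and f_add: "\<And>x y. f (x + y) = f x + f y" and f_mult: "\<And>x y. f (x * y) = f x * f y"
  shows "is_ideal_in R {x \<in> R. f x \<in> J}"
proof -
  have "f 0 = 0"
    using f_add[of 0 0] by simp
  moreover have "f (- x) = - f x" for x
    using f_add[of x "- x"] \<open>f 0 = 0\<close> by (simp add: eq_neg_iff_add_eq_0 add.commute)
  ultimately show ?thesis
    using assms(1,2) \<open>f ` R \<subseteq> R'\<close> unfolding is_ideal_in_def
    by (auto simp: f_add f_mult)
qed

lemma is_ideal_in_I_ideal: "is_ideal_in (polyring n) (I_ideal n)"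
  unfolding I_ideal_def
  by (rule is_ideal_in_ideal_gen_in[OF is_ideal_in_polyring]) (auto simp: gen_poly_in_polyring)

definition monom_vars_le :: "nat \<Rightarrow> ((nat \<times> 'a) \<Rightarrow>\<^sub>0 nat) \<Rightarrow> bool" where
  "monom_vars_le k mon \<longleftrightarrow> (\<forall>v \<in> Poly_Mapping.keys mon. fst v \<le> k)"

lemma monom_vars_le_add: "monom_vars_le k (l + r) \<longleftrightarrow> monom_vars_le k l \<and> monom_vars_le k r"
  unfolding monom_vars_le_def keys_add_nat by blast

definition kill_xvars_above :: "nat \<Rightarrow> 'a::ring_1 xipoly \<Rightarrow> 'a xipoly" where
  "kill_xvars_above k p =
     Abs_poly_mapping (\<lambda>mon. Poly_Mapping.lookup p mon when monom_vars_le k mon)"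

lemma lookup_kill_xvars_above:
  "Poly_Mapping.lookup (kill_xvars_above k p) mon =
     (Poly_Mapping.lookup p mon when monom_vars_le k mon)"
proof -
  have "finite {mon. (Poly_Mapping.lookup p mon when monom_vars_le k mon) \<noteq> 0}"
    by (rule finite_subset[of _ "Poly_Mapping.keys p"]) (auto simp: in_keys_iff)
  then show ?thesis
    unfolding kill_xvars_above_def by simp
qed

lemma kill_xvars_above_add:
  "kill_xvars_above k (p + q) = kill_xvars_above k p + kill_xvars_above k q"
  by (rule poly_mapping_eqI) (simp add: lookup_kill_xvars_above lookup_add when_add_distrib)

lemma kill_xvars_above_mult:
  "kill_xvars_above k (p * q) = kill_xvars_above k p * kill_xvars_above k q"
proof (rule poly_mapping_eqI)
  fix m
  let ?lk = "Poly_Mapping.lookup"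
  have "((?lk p l when monom_vars_le k l) * (?lk q r when monom_vars_le k r) when m = l + r)
      = (?lk p l * ?lk q r when m = l + r when monom_vars_le k m)" for l r
    by (auto simp: when_def monom_vars_le_add)
  then have "?lk (kill_xvars_above k p * kill_xvars_above k q) m
      = (\<Sum>l. \<Sum>r. ?lk p l * ?lk q r when m = l + r when monom_vars_le k m)"
    by (simp add: lookup_mult_double_sum lookup_kill_xvars_above)
  also have "\<dots> = ?lk (kill_xvars_above k (p * q)) m"
    by (cases "monom_vars_le k m") (simp_all add: lookup_mult_double_sum lookup_kill_xvars_above)
  finally show "?lk (kill_xvars_above k (p * q)) m = ?lk (kill_xvars_above k p * kill_xvars_above k q) m"
    by simp
qed

lemma kill_xvars_above_one: "kill_xvars_above k 1 = 1"
  by (rule poly_mapping_eqI) (simp add: lookup_kill_xvars_above monom_vars_le_def lookup_one when_def)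

lemma kill_xvars_above_power: "kill_xvars_above k (p ^ j) = kill_xvars_above k p ^ j"
  by (induction j) (simp_all add: kill_xvars_above_one kill_xvars_above_mult)

lemma kill_xvars_above_sum:
  "kill_xvars_above k (sum f S) = (\<Sum>i\<in>S. kill_xvars_above k (f i))"
proof (induction S rule: infinite_finite_induct)
  case (infinite S)
  then show ?case
    by (simp add: poly_mapping_eqI lookup_kill_xvars_above)
qed (simp_all add: kill_xvars_above_add poly_mapping_eqI lookup_kill_xvars_above)

lemma kill_xvars_above_xconst: "kill_xvars_above k (xconst a) = xconst a"
  by (rule poly_mapping_eqI)
    (simp add: lookup_kill_xvars_above monom_vars_le_def xconst_def lookup_single when_def)

lemma kill_xvars_above_xvar: "kill_xvars_above k (xvar i a) = (if i \<le> k then xvar i a else 0)"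
  by (rule poly_mapping_eqI)
    (auto simp: lookup_kill_xvars_above monom_vars_le_def xvar_def lookup_single when_def)

lemma keys_kill_xvars_above:
  "Poly_Mapping.keys (kill_xvars_above k p) = {mon \<in> Poly_Mapping.keys p. monom_vars_le k mon}"
  by (auto simp: in_keys_iff lookup_kill_xvars_above)

lemma kill_xvars_above_in_polyring: "p \<in> polyring n \<Longrightarrow> kill_xvars_above k p \<in> polyring k"
  unfolding polyring_iff keys_kill_xvars_above monom_vars_le_def by auto

lemma kill_xvars_above_gen_poly:
  "kill_xvars_above k (gen_poly (Suc k) a) = gen_poly k a * xconst a"
proof -
  let ?x = "xconst a"
  have "(\<Sum>i\<in>{1..Suc k}. kill_xvars_above k (xvar i a) * ?x ^ (Suc k - i))
      = (\<Sum>i\<in>{1..k}. xvar i a * ?x ^ (Suc k - i))"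
    by (simp add: kill_xvars_above_xvar)
  also have "\<dots> = (\<Sum>i\<in>{1..k}. xvar i a * ?x ^ (k - i)) * ?x"
    unfolding sum_distrib_right
    by (rule sum.cong) (simp_all add: Suc_diff_le mult.assoc power_commutes)
  finally show ?thesis
    unfolding gen_poly_def
    by (simp add: kill_xvars_above_add kill_xvars_above_sum kill_xvars_above_mult
        kill_xvars_above_power kill_xvars_above_xconst distrib_right power_commutes)
qed

lemma kill_xvars_above_I_ideal:
  assumes "p \<in> I_ideal (Suc k)"
  shows "kill_xvars_above k p \<in> I_ideal k"
proof -
  let ?J = "{p \<in> polyring (Suc k). kill_xvars_above k p \<in> I_ideal k}"
  have "is_ideal_in (polyring (Suc k)) ?J"
    by (rule is_ideal_in_vimage[OF is_ideal_in_polyring is_ideal_in_I_ideal])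
      (auto simp: kill_xvars_above_in_polyring kill_xvars_above_add kill_xvars_above_mult)
  moreover have "gen_poly k a * xconst a \<in> I_ideal k" for a
  proof -
    have "gen_poly k a \<in> I_ideal k"
      unfolding I_ideal_def using ideal_gen_in_superset by blast
    then show ?thesis
      using is_ideal_in_I_ideal[of k] xconst_in_polyring unfolding is_ideal_in_def by blast
  qed
  then have "range (gen_poly (Suc k)) \<subseteq> ?J"
    by (auto simp: gen_poly_in_polyring kill_xvars_above_gen_poly)
  ultimately have "I_ideal (Suc k) \<subseteq> ?J"
    unfolding I_ideal_def by (rule ideal_gen_in_least)
  then show ?thesis
    using assms by blast
qed

theorem lemma2p24:
  fixes alg :: "'c::comm_ring_1 \<Rightarrow> 'a::ring_1" and n :: nat
  assumes "is_algebra_map alg" and "n \<ge> 2"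
  shows "(Obst n :: 'a set) \<subseteq> Obst (n - 1)"
proof
  fix a :: 'a
  assume "a \<in> Obst n"
  moreover have "n = Suc (n - 1)"
    using \<open>n \<ge> 2\<close> by simp
  ultimately have "xconst a \<in> I_ideal (Suc (n - 1))"
    unfolding Obst_def by simp
  then have "kill_xvars_above (n - 1) (xconst a) \<in> I_ideal (n - 1)"
    by (rule kill_xvars_above_I_ideal)
  then show "a \<in> Obst (n - 1)"
    by (simp add: Obst_def kill_xvars_above_xconst)
qed

end
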